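(* Assume $k = 1$ (a single item). Let $A$ be any implementable allocation rule. Among all payment rules $P$ that implement $A$ and are ex-post individually rational, the winner-pays-bid payment rule $P^{\mathrm{WPB}}$ minimizes $\mathbb E[g(R)]$ for every convex function $g : \mathbb R \to \mathbb R$, where $R = \sum_i P_i(\bm v)$. That is, $\mathbb E[g(\sum_i P_i^{\mathrm{WPB}}(\bm v))] \le \mathbb E[g(\sum_i P_i(\bm v))]$ for every such $P$ and every convex $g$ for which these expectations exist.
   Context: Setting: $n$ risk-neutral unit-demand bidders and $k$ identical items, $1 \le k < n$. Bidder $i$ has private value $v_i \in \mathcal V_i = [0,\bar v_i]$, drawn independently across bidders from a distribution $F_i$ with density $f_i > 0$ on $\mathcal V_i$; $\bm v = (v_1,\dots,v_n)$, $\mathcal V = \prod_i \mathcal V_i$. An allocation rule is a measurable map $A : \mathcal V \to \{0,1\}^n$ with $\sum_i A_i(\bm v) \le k$. Its interim allocation is $x_i(v_i) = \mathbb E[A_i(\bm v) \mid v_i]$, and $A$ is called implementable if every $x_i$ is non-decreasing. Its interim payment function is $z_i(v_i) = v_i x_i(v_i) - \int_0^{v_i} x_i(u)\,du$. A payment rule is a measurable map $P : \mathcal V \to [0,\infty)^n$ (payments are non-negative). $P$ implements $A$ if $(A,P)$ is Bayesian incentive compatible, i.e. $\mathbb E[v_i A_i(\bm v) - P_i(\bm v) \mid v_i] \ge \mathbb E[v_i A_i(v_i',\bm v_{-i}) - P_i(v_i',\bm v_{-i}) \mid v_i]$ for all $i, v_i, v_i'$, and satisfies revenue equivalence $\mathbb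 E[P_i(\bm v) \mid v_i] = z_i(v_i)$ for all $i, v_i$. $P$ is ex-post individually rational if $v_i A_i(\bm v) - P_i(\bm v) \ge 0$ for all $i$ and $\bm v$. The winner-pays-bid (WPB) payment rule is $P_i^{\mathrm{WPB}}(\bm v) = b_i^{\mathrm{WPB}}(v_i) A_i(\bm v)$ with $b_i^{\mathrm{WPB}}(v_i) = z_i(v_i)/x_i(v_i)$ when $x_i(v_i) > 0$ and $b_i^{\mathrm{WPB}}(v_i) = 0$ otherwise. *)

theory Defs
  imports "HOL-Probability.Probability"
begin

definition value_space :: "nat set \<Rightarrow> (nat \<Rightarrow> real) \<Rightarrow> (nat \<Rightarrow> real) set" where
  "value_space I vbar = PiE I (\<lambda>i. {0..vbar i})"

definition valdist :: "(nat \<Rightarrow> real) \<Rightarrow> (nat \<Rightarrow> real \<Rightarrow> real) \<Rightarrow> nat \<Rightarrow> real measure" where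
  "valdist vbar f i = density lborel (\<lambda>x. ennreal (f i x * indicator {0..vbar i} x))"

(* E[h(v) | v_i = u] for independent values: integrate out the other bidders' values *)
definition interim :: "nat set \<Rightarrow> (nat \<Rightarrow> real measure) \<Rightarrow> nat \<Rightarrow> ((nat \<Rightarrow> real) \<Rightarrow> real) \<Rightarrow> real \<Rightarrow> real" where
  "interim I M i h u = (\<integral>w. h (w(i := u)) \<partial>(PiM (I - {i}) M))"

definition allocation_rule :: "nat set \<Rightarrow> (nat \<Rightarrow> real) \<Rightarrow> (nat \<Rightarrow> real measure) \<Rightarrow> nat
    \<Rightarrow> (nat \<Rightarrow> (nat \<Rightarrow> real) \<Rightarrow> real) \<Rightarrow> bool" where
  "allocation_rule I vbar M k A \<longleftrightarrow>
     (\<forall>i\<in>I. A i \<in> borel_measurable (PiM I M)) \<and>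
     (\<forall>v\<in>value_space I vbar. (\<forall>i\<in>I. A i v \<in> {0, 1}) \<and> (\<Sum>i\<in>I. A i v) \<le> real k)"

definition interim_alloc :: "nat set \<Rightarrow> (nat \<Rightarrow> real measure) \<Rightarrow> (nat \<Rightarrow> (nat \<Rightarrow> real) \<Rightarrow> real)
    \<Rightarrow> nat \<Rightarrow> real \<Rightarrow> real" where
  "interim_alloc I M A i u = interim I M i (A i) u"

definition interim_pay :: "nat set \<Rightarrow> (nat \<Rightarrow> real measure) \<Rightarrow> (nat \<Rightarrow> (nat \<Rightarrow> real) \<Rightarrow> real)
    \<Rightarrow> nat \<Rightarrow> real \<Rightarrow> real" where
  "interim_pay I M A i u =
     u * interim_alloc I M A i u - (LINT t:{0..u}|lborel. interim_alloc I M A i t)"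

definition implementable :: "nat set \<Rightarrow> (nat \<Rightarrow> real) \<Rightarrow> (nat \<Rightarrow> real measure)
    \<Rightarrow> (nat \<Rightarrow> (nat \<Rightarrow> real) \<Rightarrow> real) \<Rightarrow> bool" where
  "implementable I vbar M A \<longleftrightarrow> (\<forall>i\<in>I. mono_on {0..vbar i} (interim_alloc I M A i))"

definition payment_rule :: "nat set \<Rightarrow> (nat \<Rightarrow> real) \<Rightarrow> (nat \<Rightarrow> real measure)
    \<Rightarrow> (nat \<Rightarrow> (nat \<Rightarrow> real) \<Rightarrow> real) \<Rightarrow> bool" where
  "payment_rule I vbar M P \<longleftrightarrow>
     (\<forall>i\<in>I. P i \<in> borel_measurable (PiM I M)) \<and>
     (\<forall>v\<in>value_space I vbar. \<forall>i\<in>I. 0 \<le> P i v)"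

(* P implements A: Bayesian IC + revenue equivalence *)
definition implements :: "nat set \<Rightarrow> (nat \<Rightarrow> real) \<Rightarrow> (nat \<Rightarrow> real measure)
    \<Rightarrow> (nat \<Rightarrow> (nat \<Rightarrow> real) \<Rightarrow> real) \<Rightarrow> (nat \<Rightarrow> (nat \<Rightarrow> real) \<Rightarrow> real) \<Rightarrow> bool" where
  "implements I vbar M A P \<longleftrightarrow>
     payment_rule I vbar M P \<and>
     (\<forall>i\<in>I. \<forall>u\<in>{0..vbar i}. \<forall>u'\<in>{0..vbar i}.
        interim I M i (\<lambda>v. u * A i (v(i := u')) - P i (v(i := u'))) u
          \<le> interim I M i (\<lambda>v. v i * A i v - P i v) u) \<and>
     (\<forall>i\<in>I. \<forall>u\<in>{0..vbar i}.
        integrable (PiM (I - {i}) M) (\<lambda>w. P i (w(i := u))) \<and>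
        interim I M i (P i) u = interim_pay I M A i u)"

definition ex_post_IR :: "nat set \<Rightarrow> (nat \<Rightarrow> real)
    \<Rightarrow> (nat \<Rightarrow> (nat \<Rightarrow> real) \<Rightarrow> real) \<Rightarrow> (nat \<Rightarrow> (nat \<Rightarrow> real) \<Rightarrow> real) \<Rightarrow> bool" where
  "ex_post_IR I vbar A P \<longleftrightarrow> (\<forall>v\<in>value_space I vbar. \<forall>i\<in>I. 0 \<le> v i * A i v - P i v)"

(* bids are only relevant on V_i = [0, vbar_i]; outside we set them to 0 *)
definition wpb_bid :: "nat set \<Rightarrow> (nat \<Rightarrow> real) \<Rightarrow> (nat \<Rightarrow> real measure) \<Rightarrow> (nat \<Rightarrow> (nat \<Rightarrow> real) \<Rightarrow> real)
    \<Rightarrow> nat \<Rightarrow> real \<Rightarrow> real" where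
  "wpb_bid I vbar M A i u =
     (if u \<in> {0..vbar i} \<and> 0 < interim_alloc I M A i u then interim_pay I M A i u / interim_alloc I M A i u else 0)"

definition wpb :: "nat set \<Rightarrow> (nat \<Rightarrow> real) \<Rightarrow> (nat \<Rightarrow> real measure) \<Rightarrow> (nat \<Rightarrow> (nat \<Rightarrow> real) \<Rightarrow> real)
    \<Rightarrow> nat \<Rightarrow> (nat \<Rightarrow> real) \<Rightarrow> real" where
  "wpb I vbar M A i v = wpb_bid I vbar M A i (v i) * A i v"

end

theory Submission
  imports Defs
begin

text \<open>
  The WPB rule implements \<open>A\<close> because \<open>b\<^sub>i x\<^sub>i = z\<^sub>i\<close>, and it is ex-post IR because
  \<open>z\<^sub>i(u) \<le> u x\<^sub>i(u)\<close> for monotone \<open>x\<^sub>i\<close>. For the comparison fix a convex \<open>g\<close> and its right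
  derivative \<open>\<phi>\<close>, a monotone subgradient. With a single item at most one bidder \<open>j\<close>
  wins, and then both revenues are payments of \<open>j\<close> alone: \<open>P\<^sub>j\<close> and the bid \<open>b\<^sub>j(v\<^sub>j)\<close>. The
  subgradient inequality gives, pointwise,
  \<open>g(R\<^sup>W\<^sup>P\<^sup>B) + \<Sum>\<^sub>i A\<^sub>i \<phi>(b\<^sub>i(v\<^sub>i)) (P\<^sub>i - b\<^sub>i(v\<^sub>i)) \<le> g(R\<^sup>P)\<close>,
  ex-post individual rationality ensuring that losers pay nothing. The correction term has
  zero expectation: conditioned on \<open>v\<^sub>i\<close> its factor \<open>\<phi>(b\<^sub>i(v\<^sub>i))\<close> is constant, and
  \<open>E[A\<^sub>i (P\<^sub>i - b\<^sub>i(v\<^sub>i)) | v\<^sub>i] = z\<^sub>i(v\<^sub>i) - b\<^sub>i(v\<^sub>i) x\<^sub>i(v\<^sub>i) = 0\<close> by revenue equivalence.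
\<close>

lemma mono_on_set_integral_increment_bounds:
  fixes x :: "real \<Rightarrow> real"
  assumes x_meas: "x \<in> borel_measurable borel" and x_mono: "mono_on {0..V} x"
    and x_bound: "\<And>t. t \<in> {0..V} \<Longrightarrow> \<bar>x t\<bar> \<le> B"
    and ab: "0 \<le> a" "a \<le> b" "b \<le> V"
  shows "(b - a) * x a \<le> (LINT t:{0..b}|lborel. x t) - (LINT t:{0..a}|lborel. x t)"
    and "(LINT t:{0..b}|lborel. x t) - (LINT t:{0..a}|lborel. x t) \<le> (b - a) * x b"
proof -
  have int_0b: "set_integrable lborel {0..b} x"
    unfolding set_integrable_def
    by (rule integrableI_bounded_set_indicator[where B=B]) (use x_meas x_bound ab in auto)
  have int_0a: "set_integrable lborel {0..a} x"
    by (rule set_integrable_subset[OF int_0b]) (use ab in auto)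
  have int_ab: "set_integrable lborel {a<..b} x"
    by (rule set_integrable_subset[OF int_0b]) (use ab in auto)
  have split_0b: "{0..b} = {0..a} \<union> {a<..b}" using ab by auto
  have increment: "(LINT t:{0..b}|lborel. x t) - (LINT t:{0..a}|lborel. x t)
      = (LINT t:{a<..b}|lborel. x t)"
    unfolding split_0b by (subst set_integral_Un[OF _ int_0a int_ab]) auto
  have int_const: "set_integrable lborel {a<..b} (\<lambda>_. c)" for c :: real
    unfolding set_integrable_def
    by (rule integrableI_bounded_set_indicator[where B="\<bar>c\<bar>"]) (use ab in auto)
  have integral_const: "(LINT t:{a<..b}|lborel. c) = (b - a) * c" for c :: real
    using ab by (subst set_integral_const) auto
  have "(LINT t:{a<..b}|lborel. x a) \<le> (LINT t:{a<..b}|lborel. x t)"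
    by (rule set_integral_mono[OF int_const int_ab]) (use ab in \<open>auto intro!: mono_onD[OF x_mono]\<close>)
  then show "(b - a) * x a \<le> (LINT t:{0..b}|lborel. x t) - (LINT t:{0..a}|lborel. x t)"
    using increment integral_const by simp
  have "(LINT t:{a<..b}|lborel. x t) \<le> (LINT t:{a<..b}|lborel. x b)"
    by (rule set_integral_mono[OF int_ab int_const]) (use ab in \<open>auto intro!: mono_onD[OF x_mono]\<close>)
  then show "(LINT t:{0..b}|lborel. x t) - (LINT t:{0..a}|lborel. x t) \<le> (b - a) * x b"
    using increment integral_const by simp
qed

definition right_slope :: "(real \<Rightarrow> real) \<Rightarrow> real \<Rightarrow> real" where
  "right_slope g x = Inf ((\<lambda>t. (g x - g t) / (x - t)) ` {x<..})"

lemma convex_on_right_slope_le: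
  assumes "convex_on UNIV g"
  shows "g x + right_slope g x * (y - x) \<le> g y"
  using convex_le_Inf_differential[OF assms, of x y] by (simp add: right_slope_def)

lemma mono_right_slope:
  assumes g: "convex_on UNIV g"
  shows "mono (right_slope g)"
proof (rule monoI)
  fix x y :: real assume "x \<le> y"
  show "right_slope g x \<le> right_slope g y"
  proof (cases "x = y")
    case False
    with \<open>x \<le> y\<close> have "x < y" by simp
    have "right_slope g x \<le> (g x - g y) / (x - y)"
      using convex_on_right_slope_le[OF g, of x y] \<open>x < y\<close> by (simp add: field_simps)
    also have "\<dots> \<le> right_slope g y"
      unfolding right_slope_def
    proof (rule cInf_greatest)
      show "(\<lambda>t. (g y - g t) / (y - t)) ` {y<..} \<noteq> {}" by simp
      fix s assume "s \<in> (\<lambda>t. (g y - g t) / (y - t)) ` {y<..}"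
      then obtain t where t: "y < t" "s = (g y - g t) / (y - t)" by auto
      have "(g x - g y) / (x - y) \<le> (g x - g t) / (x - t)"
        by (rule convex_on_slope_le[OF g]) (use t \<open>x < y\<close> in auto)
      also have "\<dots> \<le> (g y - g t) / (y - t)"
        by (rule convex_on_slope_le[OF g]) (use t \<open>x < y\<close> in auto)
      finally show "(g x - g y) / (x - y) \<le> s" using t by simp
    qed
    finally show ?thesis .
  qed simp
qed

locale single_item_auction =
  fixes n :: nat and vbar :: "nat \<Rightarrow> real" and f :: "nat \<Rightarrow> real \<Rightarrow> real"
    and A :: "nat \<Rightarrow> (nat \<Rightarrow> real) \<Rightarrow> real"
  assumes f_meas: "\<forall>i<n. f i \<in> borel_measurable lborel"
    and f_norm: "\<forall>i<n. (\<integral>\<^sup>+x\<in>{0..vbar i}. ennreal (f i x) \<partial>lborel) = 1"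
    and A_rule: "allocation_rule {..<n} vbar (valdist vbar f) 1 A"
    and A_impl: "implementable {..<n} vbar (valdist vbar f) A"
begin

abbreviation "M \<equiv> valdist vbar f"

text \<open>The library's product theorems need a probability space at every index, not just at the
  bidders, so \<open>M\<close> is padded with a point mass outside \<open>{..<n}\<close>.\<close>
definition "M_padded j = (if j < n then M j else return borel 0)"

lemma sets_M[measurable_cong]: "sets (M i) = sets borel"
  by (simp add: valdist_def)

lemma space_M[simp]: "space (M i) = UNIV"
  by (simp add: valdist_def)

lemma density_measurable:
  "i < n \<Longrightarrow> (\<lambda>x. ennreal (f i x * indicator {0..vbar i} x)) \<in> borel_measurable lborel"
proof -
  assume "i < n"
  then have [measurable]: "f i \<in> borel_measurable borel" using f_meas by simp
  show ?thesis by measurable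
qed

lemma prob_space_M: "i < n \<Longrightarrow> prob_space (M i)"
proof (rule prob_spaceI)
  assume i: "i < n"
  have "emeasure (M i) (space (M i))
      = (\<integral>\<^sup>+ x. ennreal (f i x * indicator {0..vbar i} x) * indicator UNIV x \<partial>lborel)"
    unfolding valdist_def by (subst emeasure_density[OF density_measurable[OF i]]) auto
  also have "\<dots> = (\<integral>\<^sup>+x\<in>{0..vbar i}. ennreal (f i x) \<partial>lborel)"
    by (intro nn_integral_cong) (auto split: split_indicator)
  finally show "emeasure (M i) (space (M i)) = 1" using f_norm i by simp
qed

lemma prob_space_PiM_M: "K \<subseteq> {..<n} \<Longrightarrow> prob_space (PiM K M)"
  by (rule prob_space_PiM) (auto intro: prob_space_M)

lemma prob_space_M_padded: "prob_space (M_padded j)"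
  by (auto simp: M_padded_def prob_space_M intro: prob_space_return)

lemma product_prob_space_M_padded: "product_prob_space M_padded"
  unfolding product_prob_space_def product_prob_space_axioms_def product_sigma_finite_def
  using prob_space_M_padded by (auto intro: prob_space_imp_sigma_finite)

lemma PiM_M_padded: "K \<subseteq> {..<n} \<Longrightarrow> PiM K M = PiM K M_padded"
  by (rule PiM_cong) (auto simp: M_padded_def)

lemma AE_M_in_range: "i < n \<Longrightarrow> AE u in M i. u \<in> {0..vbar i}"
  unfolding valdist_def by (subst AE_density[OF density_measurable]) (auto split: split_indicator)

lemma AE_PiM_in_ranges: "K \<subseteq> {..<n} \<Longrightarrow> AE w in PiM K M. \<forall>j\<in>K. w j \<in> {0..vbar j}"
proof -
  assume K: "K \<subseteq> {..<n}"
  have "AE w in PiM K M_padded. \<forall>j\<in>K. w j \<in> {0..vbar j}"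
  proof (rule AE_finite_allI)
    show "finite K" using K finite_subset by blast
    fix j assume j: "j \<in> K"
    then have "M_padded j = M j" using K by (auto simp: M_padded_def)
    moreover have "AE u in M j. u \<in> {0..vbar j}" using AE_M_in_range j K by auto
    ultimately have "AE u in M_padded j. u \<in> {0..vbar j}" by (simp only:)
    then show "AE w in PiM K M_padded. w j \<in> {0..vbar j}"
      by (intro AE_PiM_component prob_space_M_padded j)
  qed
  then show ?thesis unfolding PiM_M_padded[OF K] .
qed

lemma fun_upd_in_value_space:
  assumes "i < n" "u \<in> {0..vbar i}" "w \<in> space (PiM ({..<n} - {i}) M)"
    and "\<forall>j\<in>{..<n} - {i}. w j \<in> {0..vbar j}"
  shows "w(i := u) \<in> value_space {..<n} vbar"
  using assms by (auto simp: value_space_def space_PiM PiE_def extensional_def)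

lemma AE_value_space: "AE v in PiM {..<n} M. v \<in> value_space {..<n} vbar"
  using AE_PiM_in_ranges[OF subset_refl] AE_space
  by eventually_elim (simp add: value_space_def space_PiM PiE_iff)

lemma AE_fun_upd_in_value_space:
  assumes "i < n" "u \<in> {0..vbar i}"
  shows "AE w in PiM ({..<n} - {i}) M. w(i := u) \<in> value_space {..<n} vbar"
  using AE_PiM_in_ranges[OF Diff_subset] AE_space
  by eventually_elim (use fun_upd_in_value_space[OF assms] in auto)

lemma value_space_component: "v \<in> value_space {..<n} vbar \<Longrightarrow> i < n \<Longrightarrow> v i \<in> {0..vbar i}"
  unfolding value_space_def by (simp add: PiE_iff)

lemma measurable_fun_upd_pair:
  "i < n \<Longrightarrow> (\<lambda>p. (snd p)(i := fst p))
     \<in> measurable (M i \<Otimes>\<^sub>M PiM ({..<n} - {i}) M) (PiM {..<n} M)"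
  by (rule measurable_fun_upd[where J="{..<n} - {i}"]) auto

lemma measurable_fun_upd_const:
  "i < n \<Longrightarrow> (\<lambda>w. w(i := u)) \<in> measurable (PiM ({..<n} - {i}) M) (PiM {..<n} M)"
  by (rule measurable_fun_upd[where J="{..<n} - {i}"]) auto

lemma interim_measurable:
  assumes i: "i < n" and h: "h \<in> borel_measurable (PiM {..<n} M)"
  shows "interim {..<n} M i h \<in> borel_measurable borel"
proof -
  interpret Q: prob_space "PiM ({..<n} - {i}) M" by (rule prob_space_PiM_M) auto
  have "(\<lambda>p. h ((snd p)(i := fst p))) \<in> borel_measurable (M i \<Otimes>\<^sub>M PiM ({..<n} - {i}) M)"
    using measurable_comp[OF measurable_fun_upd_pair[OF i] h] by (simp add: comp_def)
  then have "(\<lambda>u. \<integral>w. h (w(i := u)) \<partial>PiM ({..<n} - {i}) M) \<in> borel_measurable (M i)"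
    by (intro Q.borel_measurable_lebesgue_integral) (simp add: split_beta')
  then show ?thesis unfolding interim_def by (simp add: measurable_cong_sets[OF sets_M refl])
qed

lemma integral_PiM_eq_integral_interim:
  assumes i: "i < n" and h: "integrable (PiM {..<n} M) h"
  shows "integral\<^sup>L (PiM {..<n} M) h = (\<integral>u. interim {..<n} M i h u \<partial>M i)"
proof -
  interpret P: product_prob_space M_padded by (rule product_prob_space_M_padded)
  let ?J = "{..<n} - {i}"
  have split_n: "{..<n} = {i} \<union> ?J" using i by auto
  have "integral\<^sup>L (PiM {..<n} M) h = integral\<^sup>L (PiM ({i} \<union> ?J) M_padded) h"
    using PiM_M_padded[of "{..<n}"] split_n by simp
  also have "\<dots> = (\<integral>x. (\<integral>y. h (merge {i} ?J (x, y)) \<partial>PiM ?J M_padded) \<partial>PiM {i} M_padded)"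
    using P.product_integral_fold[of "{i}" ?J h] h PiM_M_padded[of "{..<n}"] split_n by auto
  also have "\<dots> = (\<integral>x. (\<integral>y. h (y(i := x i)) \<partial>PiM ?J M_padded) \<partial>PiM {i} M_padded)"
  proof (intro Bochner_Integration.integral_cong refl)
    fix x y assume "x \<in> space (PiM {i} M_padded)" "y \<in> space (PiM ?J M_padded)"
    then show "h (merge {i} ?J (x, y)) = h (y(i := x i))"
      by (intro arg_cong[where f=h])
        (auto simp: merge_def space_PiM PiE_def extensional_def fun_eq_iff)
  qed
  also have "\<dots> = (\<integral>u. (\<integral>y. h (y(i := u)) \<partial>PiM ?J M_padded) \<partial>M_padded i)"
  proof (rule P.product_integral_singleton)
    interpret Q: prob_space "PiM ?J M_padded" by (rule prob_space_PiM) (rule prob_space_M_padded)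
    have "(\<lambda>p. h ((snd p)(i := fst p))) \<in> borel_measurable (M i \<Otimes>\<^sub>M PiM ?J M)"
      using measurable_comp[OF measurable_fun_upd_pair[OF i]] h by (auto simp: comp_def)
    then have "(\<lambda>p. h ((snd p)(i := fst p))) \<in> borel_measurable (M_padded i \<Otimes>\<^sub>M PiM ?J M_padded)"
      using PiM_M_padded[of ?J] i by (simp add: M_padded_def)
    then show "(\<lambda>u. \<integral>y. h (y(i := u)) \<partial>PiM ?J M_padded) \<in> borel_measurable (M_padded i)"
      by (intro Q.borel_measurable_lebesgue_integral) (simp add: split_beta')
  qed
  finally show ?thesis using PiM_M_padded[of ?J] i by (simp add: M_padded_def interim_def)
qed

lemma A_measurable[measurable]: "i < n \<Longrightarrow> A i \<in> borel_measurable (PiM {..<n} M)"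
  using A_rule by (auto simp: allocation_rule_def)

lemma A_01: "v \<in> value_space {..<n} vbar \<Longrightarrow> i < n \<Longrightarrow> A i v \<in> {0, 1}"
  using A_rule by (auto simp: allocation_rule_def)

lemma A_single_winner:
  assumes v: "v \<in> value_space {..<n} vbar" and j: "j < n" "A j v = 1"
    and k: "k < n" "k \<noteq> j"
  shows "A k v = 0"
proof (rule ccontr)
  assume "A k v \<noteq> 0"
  then have "A k v = 1" using A_01[OF v k(1)] by auto
  have "(\<Sum>i\<in>{j, k}. A i v) \<le> (\<Sum>i<n. A i v)"
    by (rule sum_mono2) (use j k A_01[OF v] in \<open>force+\<close>)
  moreover have "(\<Sum>i<n. A i v) \<le> 1" using A_rule v by (auto simp: allocation_rule_def)
  ultimately show False using j k \<open>A k v = 1\<close> by simp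
qed

abbreviation "xi i \<equiv> interim_alloc {..<n} M A i"
abbreviation "zi i \<equiv> interim_pay {..<n} M A i"
abbreviation "bi i \<equiv> wpb_bid {..<n} vbar M A i"
abbreviation "Xi i u \<equiv> LINT t:{0..u}|lborel. xi i t"

lemma integrable_A_fun_upd:
  assumes i: "i < n" and u: "u \<in> {0..vbar i}"
  shows "integrable (PiM ({..<n} - {i}) M) (\<lambda>w. A i (w(i := u)))"
proof -
  interpret Q: prob_space "PiM ({..<n} - {i}) M" by (rule prob_space_PiM_M) auto
  show ?thesis
  proof (rule Q.integrable_const_bound[where B=1])
    show "AE w in PiM ({..<n} - {i}) M. norm (A i (w(i := u))) \<le> 1"
      using AE_fun_upd_in_value_space[OF i u] by eventually_elim (use A_01 i in fastforce)
    show "(\<lambda>w. A i (w(i := u))) \<in> borel_measurable (PiM ({..<n} - {i}) M)"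
      using measurable_comp[OF measurable_fun_upd_const[OF i] A_measurable[OF i]]
      by (simp add: comp_def)
  qed
qed

lemma interim_alloc_bounds:
  assumes i: "i < n" and u: "u \<in> {0..vbar i}"
  shows "0 \<le> xi i u" "xi i u \<le> 1"
proof -
  interpret Q: prob_space "PiM ({..<n} - {i}) M" by (rule prob_space_PiM_M) auto
  have A_01_AE: "AE w in PiM ({..<n} - {i}) M. A i (w(i := u)) \<in> {0, 1}"
    using AE_fun_upd_in_value_space[OF i u] by eventually_elim (use A_01 i in fastforce)
  show "0 \<le> xi i u" unfolding interim_alloc_def interim_def
    by (rule integral_nonneg_AE) (use A_01_AE in \<open>eventually_elim, auto\<close>)
  have "xi i u \<le> (\<integral>w. 1 \<partial>PiM ({..<n} - {i}) M)" unfolding interim_alloc_def interim_def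
    by (rule integral_mono_AE)
      (use A_01_AE integrable_A_fun_upd[OF i u] in \<open>auto elim!: eventually_mono\<close>)
  then show "xi i u \<le> 1" by (simp add: Q.prob_space)
qed

lemma interim_alloc_measurable[measurable]: "i < n \<Longrightarrow> xi i \<in> borel_measurable borel"
  unfolding interim_alloc_def by (rule interim_measurable) auto

lemma interim_alloc_increment_bounds:
  assumes i: "i < n" and ab: "0 \<le> a" "a \<le> b" "b \<le> vbar i"
  shows "(b - a) * xi i a \<le> Xi i b - Xi i a" "Xi i b - Xi i a \<le> (b - a) * xi i b"
  using mono_on_set_integral_increment_bounds[OF interim_alloc_measurable[OF i] _ _ ab, of 1]
    A_impl interim_alloc_bounds[OF i] i
  by (auto simp: implementable_def)

lemma interim_alloc_integral_0: "Xi i 0 = 0"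
  unfolding set_lebesgue_integral_def
  by (rule integral_eq_zero_AE) (use AE_lborel_singleton[of 0] in \<open>auto elim!: eventually_mono\<close>)

lemma interim_pay_bounds:
  assumes i: "i < n" and u: "u \<in> {0..vbar i}"
  shows "0 \<le> zi i u" "zi i u \<le> u * xi i u"
proof -
  have "u * xi i 0 \<le> Xi i u" "Xi i u \<le> u * xi i u"
    using interim_alloc_increment_bounds[OF i, of 0 u] u interim_alloc_integral_0[of i] by auto
  moreover have "0 \<le> u * xi i 0" using interim_alloc_bounds[OF i, of 0] u by auto
  ultimately show "0 \<le> zi i u" "zi i u \<le> u * xi i u" by (auto simp: interim_pay_def)
qed

text \<open>Myerson's lemma; this is where implementability (monotone \<open>x\<^sub>i\<close>) enters.\<close>
lemma interim_utility_le_truthful: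
  assumes i: "i < n" and u: "u \<in> {0..vbar i}" and u': "u' \<in> {0..vbar i}"
  shows "u * xi i u' - zi i u' \<le> u * xi i u - zi i u"
proof (cases "u' \<le> u")
  case True
  then show ?thesis using interim_alloc_increment_bounds(1)[OF i, of u' u] u u'
    by (auto simp: interim_pay_def algebra_simps)
next
  case False
  then show ?thesis using interim_alloc_increment_bounds(2)[OF i, of u u'] u u'
    by (auto simp: interim_pay_def algebra_simps)
qed

lemma wpb_bid_bounds:
  assumes i: "i < n" and u: "u \<in> {0..vbar i}"
  shows "0 \<le> bi i u" "bi i u \<le> u"
  using interim_pay_bounds[OF i u] interim_alloc_bounds[OF i u] u
  by (auto simp: wpb_bid_def divide_le_eq mult.commute)

text \<open>Where \<open>x\<^sub>i(u) = 0\<close> the bid is the junk value \<open>0\<close>, but then \<open>z\<^sub>i(u) = 0\<close> as well.\<close>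
lemma wpb_bid_mult_interim_alloc:
  assumes i: "i < n" and u: "u \<in> {0..vbar i}"
  shows "bi i u * xi i u = zi i u"
proof (cases "0 < xi i u")
  case False
  then have "xi i u = 0" using interim_alloc_bounds[OF i u] by auto
  then show ?thesis using interim_pay_bounds[OF i u] u by (simp add: wpb_bid_def)
qed (use u in \<open>simp add: wpb_bid_def\<close>)

lemma wpb_bid_measurable[measurable]: "i < n \<Longrightarrow> bi i \<in> borel_measurable borel"
proof -
  assume i: "i < n"
  have [measurable]: "(\<lambda>u. Xi i u) \<in> borel_measurable borel"
  proof -
    have "(\<lambda>p::real \<times> real. indicator {0..fst p} (snd p) *\<^sub>R xi i (snd p))
        = (\<lambda>p. if 0 \<le> snd p \<and> snd p \<le> fst p then xi i (snd p) else 0)"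
      by (auto simp: fun_eq_iff split: split_indicator)
    also have "\<dots> \<in> borel_measurable (borel \<Otimes>\<^sub>M lborel)"
      using i by measurable
    finally have "(\<lambda>u. \<integral>t. indicator {0..u} t *\<^sub>R xi i t \<partial>lborel) \<in> borel_measurable borel"
      by (intro lborel.borel_measurable_lebesgue_integral) (simp add: split_beta')
    then show ?thesis by (simp add: set_lebesgue_integral_def)
  qed
  have [measurable]: "zi i \<in> borel_measurable borel"
    unfolding interim_pay_def[abs_def] using i by measurable
  show ?thesis unfolding wpb_bid_def using i by measurable
qed

abbreviation "W \<equiv> wpb {..<n} vbar M A"

lemma wpb_measurable[measurable]: "i < n \<Longrightarrow> W i \<in> borel_measurable (PiM {..<n} M)"
  unfolding wpb_def by measurable

lemma wpb_bounds:
  assumes v: "v \<in> value_space {..<n} vbar" and i: "i < n"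
  shows "0 \<le> W i v" "W i v \<le> v i * A i v"
  using wpb_bid_bounds[OF i value_space_component[OF v i]] A_01[OF v i]
  unfolding wpb_def by auto

lemma interim_wpb_fun_upd:
  "interim {..<n} M i (\<lambda>v. c * A i (v(i := u')) - W i (v(i := u'))) u = (c - bi i u') * xi i u'"
proof -
  have "interim {..<n} M i (\<lambda>v. c * A i (v(i := u')) - W i (v(i := u'))) u
      = (\<integral>w. (c - bi i u') * A i (w(i := u')) \<partial>PiM ({..<n} - {i}) M)"
    by (simp add: interim_def wpb_def left_diff_distrib)
  then show ?thesis by (simp add: interim_alloc_def interim_def)
qed

lemma wpb_implements: "implements {..<n} vbar M A W"
  unfolding implements_def
proof (intro conjI ballI)
  show "payment_rule {..<n} vbar M W"
    unfolding payment_rule_def using wpb_measurable wpb_bounds(1) by simp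
next
  fix i u u' assume "i \<in> {..<n}" and u: "u \<in> {0..vbar i}" and u': "u' \<in> {0..vbar i}"
  then have i: "i < n" by simp
  have "interim {..<n} M i (\<lambda>v. u * A i (v(i := u')) - W i (v(i := u'))) u
      = u * xi i u' - zi i u'"
    using wpb_bid_mult_interim_alloc[OF i u'] by (simp add: interim_wpb_fun_upd left_diff_distrib)
  also have "\<dots> \<le> u * xi i u - zi i u" by (rule interim_utility_le_truthful[OF i u u'])
  also have "\<dots> = interim {..<n} M i (\<lambda>v. u * A i (v(i := u)) - W i (v(i := u))) u"
    using wpb_bid_mult_interim_alloc[OF i u] by (simp add: interim_wpb_fun_upd left_diff_distrib)
  also have "\<dots> = interim {..<n} M i (\<lambda>v. v i * A i v - W i v) u"
    by (simp add: interim_def)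
  finally show "interim {..<n} M i (\<lambda>v. u * A i (v(i := u')) - W i (v(i := u'))) u
      \<le> interim {..<n} M i (\<lambda>v. v i * A i v - W i v) u" .
next
  fix i u assume "i \<in> {..<n}" and u: "u \<in> {0..vbar i}"
  then have i: "i < n" by simp
  show "integrable (PiM ({..<n} - {i}) M) (\<lambda>w. W i (w(i := u)))"
    unfolding wpb_def using integrable_A_fun_upd[OF i u] by simp
  show "interim {..<n} M i (W i) u = interim_pay {..<n} M A i u"
    using interim_wpb_fun_upd[of i 0 u u] wpb_bid_mult_interim_alloc[OF i u]
    by (simp add: interim_def)
qed

lemma wpb_ex_post_IR: "ex_post_IR {..<n} vbar A W"
  unfolding ex_post_IR_def using wpb_bounds(2) by simp

end

locale IR_implementation = single_item_auction +
  fixes P :: "nat \<Rightarrow> (nat \<Rightarrow> real) \<Rightarrow> real"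
  assumes P_implements: "implements {..<n} vbar (valdist vbar f) A P"
    and P_IR: "ex_post_IR {..<n} vbar A P"
begin

lemma P_measurable[measurable]: "i < n \<Longrightarrow> P i \<in> borel_measurable (PiM {..<n} M)"
  using P_implements by (simp add: implements_def payment_rule_def)

lemma P_bounds:
  assumes "v \<in> value_space {..<n} vbar" "i < n"
  shows "0 \<le> P i v" "P i v \<le> v i * A i v"
  using P_implements P_IR assms by (auto simp: implements_def payment_rule_def ex_post_IR_def)

lemma P_eq_0_if_loses: "v \<in> value_space {..<n} vbar \<Longrightarrow> i < n \<Longrightarrow> A i v = 0 \<Longrightarrow> P i v = 0"
  using P_bounds[of v i] by simp

lemma P_le_vbar: "v \<in> value_space {..<n} vbar \<Longrightarrow> i < n \<Longrightarrow> P i v \<le> vbar i"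
  using P_bounds[of v i] A_01[of v i] value_space_component[of v i] by auto

lemma interim_P:
  assumes "i < n" "u \<in> {0..vbar i}"
  shows "integrable (PiM ({..<n} - {i}) M) (\<lambda>w. P i (w(i := u)))"
    and "interim {..<n} M i (P i) u = zi i u"
  using P_implements assms by (auto simp: implements_def)

text \<open>The first-order term of \<open>g\<close> around the WPB revenue, attributed to bidder \<open>i\<close>.\<close>
definition linearization_term :: "(real \<Rightarrow> real) \<Rightarrow> nat \<Rightarrow> (nat \<Rightarrow> real) \<Rightarrow> real" where
  "linearization_term g i v = A i v * right_slope g (bi i (v i)) * (P i v - bi i (v i))"

lemma convex_revenue_le:
  assumes g: "convex_on UNIV g" and v: "v \<in> value_space {..<n} vbar"
  shows "g (\<Sum>i<n. W i v) + (\<Sum>i<n. linearization_term g i v) \<le> g (\<Sum>i<n. P i v)"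
proof (cases "\<exists>j<n. A j v = 1")
  case True
  then obtain j where j: "j < n" "A j v = 1" by auto
  have sum_winner: "(\<Sum>i<n. h i) = h j" if "\<And>k. k < n \<Longrightarrow> A k v = 0 \<Longrightarrow> h k = 0"
    for h :: "nat \<Rightarrow> real"
    using sum.mono_neutral_right[of "{..<n}" "{j}" h] j A_single_winner[OF v j] that by auto
  have "(\<Sum>i<n. P i v) = P j v"
    by (rule sum_winner) (rule P_eq_0_if_loses[OF v])
  moreover have "(\<Sum>i<n. W i v) = bi j (v j)"
    using sum_winner[of "\<lambda>i. W i v"] j by (simp add: wpb_def)
  moreover have "(\<Sum>i<n. linearization_term g i v)
      = right_slope g (bi j (v j)) * (P j v - bi j (v j))"
    using sum_winner[of "\<lambda>i. linearization_term g i v"] j by (simp add: linearization_term_def)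
  ultimately show ?thesis by (simp add: convex_on_right_slope_le[OF g])
next
  case False
  then have "A i v = 0" if "i < n" for i using A_01[OF v that] that by auto
  then show ?thesis using P_eq_0_if_loses[OF v] by (simp add: wpb_def linearization_term_def)
qed

lemma linearization_term_measurable:
  assumes "convex_on UNIV g"
  shows "i < n \<Longrightarrow> linearization_term g i \<in> borel_measurable (PiM {..<n} M)"
proof -
  have [measurable]: "right_slope g \<in> borel_measurable borel"
    by (rule borel_measurable_mono[OF mono_right_slope[OF assms]])
  show "i < n \<Longrightarrow> ?thesis" unfolding linearization_term_def[abs_def] by measurable
qed

lemma integrable_linearization_term:
  assumes g: "convex_on UNIV g" and i: "i < n"
  shows "integrable (PiM {..<n} M) (linearization_term g i)"
proof -
  interpret Q: prob_space "PiM {..<n} M" by (rule prob_space_PiM_M) auto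
  let ?B = "(\<bar>right_slope g 0\<bar> + \<bar>right_slope g (vbar i)\<bar>) * vbar i"
  show ?thesis
  proof (rule Q.integrable_const_bound[where B="?B"])
    show "AE v in PiM {..<n} M. norm (linearization_term g i v) \<le> ?B"
      using AE_value_space
    proof eventually_elim
      case (elim v)
      have vi: "v i \<in> {0..vbar i}" by (rule value_space_component[OF elim i])
      note b = wpb_bid_bounds[OF i vi]
      have "right_slope g 0 \<le> right_slope g (bi i (v i))"
        "right_slope g (bi i (v i)) \<le> right_slope g (vbar i)"
        using b vi by (auto intro!: monoD[OF mono_right_slope[OF g]])
      then have slope: "\<bar>right_slope g (bi i (v i))\<bar> \<le> \<bar>right_slope g 0\<bar> + \<bar>right_slope g (vbar i)\<bar>"
        by linarith
      have diff: "\<bar>P i v - bi i (v i)\<bar> \<le> vbar i"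
        using P_bounds(1)[OF elim i] P_le_vbar[OF elim i] b vi by (intro abs_leI) auto
      have "\<bar>A i v\<bar> \<le> 1" using A_01[OF elim i] by auto
      then have "\<bar>A i v\<bar> * \<bar>right_slope g (bi i (v i))\<bar> * \<bar>P i v - bi i (v i)\<bar> \<le> 1 * (\<bar>right_slope g 0\<bar> + \<bar>right_slope g (vbar i)\<bar>) * vbar i"
        by (intro mult_mono slope diff) auto
      then show ?case by (simp add: linearization_term_def abs_mult)
    qed
  qed (rule linearization_term_measurable[OF g i])
qed

text \<open>Revenue equivalence at work: on the event that \<open>i\<close> wins, \<open>P\<^sub>i\<close> and the bid have the
  same conditional expectation given \<open>v\<^sub>i\<close>.\<close>
lemma interim_linearization_term:
  assumes g: "convex_on UNIV g" and i: "i < n" and u: "u \<in> {0..vbar i}"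
  shows "interim {..<n} M i (linearization_term g i) u = 0"
proof -
  let ?Q = "PiM ({..<n} - {i}) M"
  have meas_upd: "(\<lambda>w. h (w(i := u))) \<in> borel_measurable ?Q"
    if "h \<in> borel_measurable (PiM {..<n} M)" for h
    using measurable_comp[OF measurable_fun_upd_const[OF i] that] by (simp add: comp_def)
  have [measurable]: "(\<lambda>w. P i (w(i := u))) \<in> borel_measurable ?Q"
    "(\<lambda>w. A i (w(i := u))) \<in> borel_measurable ?Q"
    using i by (auto intro: meas_upd)
  have "interim {..<n} M i (linearization_term g i) u
      = (\<integral>w. right_slope g (bi i u) * (P i (w(i := u)) - bi i u * A i (w(i := u))) \<partial>?Q)"
    unfolding interim_def
  proof (rule integral_cong_AE)
    show "AE w in ?Q. linearization_term g i (w(i := u))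
        = right_slope g (bi i u) * (P i (w(i := u)) - bi i u * A i (w(i := u)))"
      using AE_fun_upd_in_value_space[OF i u]
    proof eventually_elim
      case (elim w)
      then show ?case
        using A_01[OF elim i] P_eq_0_if_loses[OF elim i]
        by (auto simp: linearization_term_def algebra_simps)
    qed
  qed (auto intro: meas_upd linearization_term_measurable[OF g i])
  also have "\<dots> = right_slope g (bi i u) * (zi i u - bi i u * xi i u)"
    using interim_P[OF i u] integrable_A_fun_upd[OF i u]
    by (simp add: interim_alloc_def interim_def)
  finally show ?thesis using wpb_bid_mult_interim_alloc[OF i u] by simp
qed

lemma integral_linearization_term:
  assumes g: "convex_on UNIV g" and i: "i < n"
  shows "integral\<^sup>L (PiM {..<n} M) (linearization_term g i) = 0"
proof -
  have "AE u in M i. interim {..<n} M i (linearization_term g i) u = 0"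
    using AE_M_in_range[OF i] by eventually_elim (rule interim_linearization_term[OF g i])
  then show ?thesis
    using integral_PiM_eq_integral_interim[OF i integrable_linearization_term[OF g i]]
    by (simp add: integral_eq_zero_AE)
qed

lemma expected_convex_revenue_le:
  assumes g: "convex_on UNIV g"
    and int_W: "integrable (PiM {..<n} M) (\<lambda>v. g (\<Sum>i<n. W i v))"
    and int_P: "integrable (PiM {..<n} M) (\<lambda>v. g (\<Sum>i<n. P i v))"
  shows "(\<integral>v. g (\<Sum>i<n. W i v) \<partial>PiM {..<n} M) \<le> (\<integral>v. g (\<Sum>i<n. P i v) \<partial>PiM {..<n} M)"
proof -
  have int_lin: "integrable (PiM {..<n} M) (\<lambda>v. \<Sum>i<n. linearization_term g i v)"
    using integrable_linearization_term[OF g] by auto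
  have "(\<integral>v. (\<Sum>i<n. linearization_term g i v) \<partial>PiM {..<n} M) = 0"
    using integrable_linearization_term[OF g] integral_linearization_term[OF g] by simp
  then have "(\<integral>v. g (\<Sum>i<n. W i v) \<partial>PiM {..<n} M)
      = (\<integral>v. g (\<Sum>i<n. W i v) + (\<Sum>i<n. linearization_term g i v) \<partial>PiM {..<n} M)"
    using int_W int_lin by simp
  also have "\<dots> \<le> (\<integral>v. g (\<Sum>i<n. P i v) \<partial>PiM {..<n} M)"
    using AE_value_space
    by (intro integral_mono_AE int_P Bochner_Integration.integrable_add int_W int_lin)
      (auto elim!: eventually_mono intro: convex_revenue_le[OF g])
  finally show ?thesis .
qed

end

theorem mainTheorem2:
  fixes n :: nat and vbar :: "nat \<Rightarrow> real" and f :: "nat \<Rightarrow> real \<Rightarrow> real"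
    and A :: "nat \<Rightarrow> (nat \<Rightarrow> real) \<Rightarrow> real"
  assumes k_lt_n: "1 < n"
    and f_meas: "\<forall>i<n. f i \<in> borel_measurable lborel"
    and f_pos: "\<forall>i<n. \<forall>x\<in>{0..vbar i}. 0 < f i x"
    and f_norm: "\<forall>i<n. (\<integral>\<^sup>+x\<in>{0..vbar i}. ennreal (f i x) \<partial>lborel) = 1"
    and A_rule: "allocation_rule {..<n} vbar (valdist vbar f) 1 A"
    and A_impl: "implementable {..<n} vbar (valdist vbar f) A"
  shows "implements {..<n} vbar (valdist vbar f) A (wpb {..<n} vbar (valdist vbar f) A)
       \<and> ex_post_IR {..<n} vbar A (wpb {..<n} vbar (valdist vbar f) A)
       \<and> (\<forall>P (g :: real \<Rightarrow> real).
            implements {..<n} vbar (valdist vbar f) A P \<and> ex_post_IR {..<n} vbar A P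
            \<and> convex_on UNIV g
            \<and> integrable (PiM {..<n} (valdist vbar f))
                 (\<lambda>v. g (\<Sum>i<n. wpb {..<n} vbar (valdist vbar f) A i v))
            \<and> integrable (PiM {..<n} (valdist vbar f)) (\<lambda>v. g (\<Sum>i<n. P i v))
            \<longrightarrow> (\<integral>v. g (\<Sum>i<n. wpb {..<n} vbar (valdist vbar f) A i v) \<partial>PiM {..<n} (valdist vbar f))
                \<le> (\<integral>v. g (\<Sum>i<n. P i v) \<partial>PiM {..<n} (valdist vbar f)))"
proof -
  interpret single_item_auction n vbar f A
    using f_meas f_norm A_rule A_impl by unfold_locales
  have "(\<integral>v. g (\<Sum>i<n. W i v) \<partial>PiM {..<n} M) \<le> (\<integral>v. g (\<Sum>i<n. P i v) \<partial>PiM {..<n} M)"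
    if "implements {..<n} vbar M A P" "ex_post_IR {..<n} vbar A P" "convex_on UNIV g"
      "integrable (PiM {..<n} M) (\<lambda>v. g (\<Sum>i<n. W i v))"
      "integrable (PiM {..<n} M) (\<lambda>v. g (\<Sum>i<n. P i v))"
    for P and g :: "real \<Rightarrow> real"
  proof -
    interpret IR_implementation n vbar f A P
      using that(1,2) by unfold_locales
    show ?thesis using that(3-5) by (rule expected_convex_revenue_le)
  qed
  then show ?thesis using wpb_implements wpb_ex_post_IR by blast
qed

end
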